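(* Let $\mathbf{C}$ be a locally small category, $\Omega$ an object, $\Phi\colon\mathbf{C}^{\mathrm{op}}\to\mathbf{Pos}$ a functor whose fibres have all meets preserved by reindexing $f^*=\Phi f$, and $d_\Omega\in\Phi\Omega$. Let $\alpha_Y(S)=\bigwedge_{k\in S}k^*(d_\Omega)$, $\gamma_Y(d)=\{k\in\mathbf{C}(Y,\Omega)\mid d\preceq k^*(d_\Omega)\}$, $\mathrm{cl}_Y=\gamma_Y\circ\alpha_Y$. Let $F\colon\mathbf{C}\to\mathbf{C}$ be a functor, $(\mathit{ev}_\lambda\colon F\Omega\to\Omega)_{\lambda\in\Lambda}$ morphisms, $\Lambda_Y(S)=\{\mathit{ev}_\lambda\circ Fh\mid\lambda\in\Lambda,h\in S\}$, and $\mathcal{K}_X=\alpha_{FX}\circ\Lambda_X\circ\gamma_X$. Fix an object $X$ and a closure operator $\mathrm{cl}'_X$ on $(\mathcal{P}(\mathbf{C}(X,\Omega)),\subseteq)$ that is a subclosure of $\mathrm{cl}_X$ ($\mathrm{cl}'_X\subseteq\mathrm{cl}_X$ pointwise) and is compatible ($\Lambda_X\circ\mathrm{cl}'_X\circ\mathrm{cl}_X\subseteq\mathrm{cl}_{FX}\circ\Lambda_X\circ\mathrm{cl}'_X$ pointwise). For a set $\Theta_X\subseteq\mathbf{C}(X,\Omega)$ and a coalgebra $c\colon X\to FX$ define the logic function $\mathrm{lo}_X(S)=\mathcal{P}(c^\bullet)(\Lambda_X(\mathrm{cl}'_X(S)))\cup\Theta_X$ and the behaviour function $\mathrm{be}_X(d)=c^*(\mathcal{K}_X(d))\wedge\alpha_X(\Theta_X)$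 on $\Phi X$. Then $\alpha_X\circ\mathrm{lo}_X\circ\gamma_X=\mathrm{be}_X$.
   Context: A closure operator is a monotone, idempotent, extensive map. $c^\bullet\colon\mathbf{C}(FX,\Omega)\to\mathbf{C}(X,\Omega)$ is precomposition with $c$, $\mathcal{P}(c^\bullet)$ its direct image, and $c^*=\Phi c\colon\Phi(FX)\to\Phi X$. *)

theory Defs
  imports Main
begin

text \<open>A (locally small) category: objects are the elements of type 'o, morphisms the
elements of type 'm; cmp g f is g after f (defined when trg f = src g).\<close>

locale category =
  fixes src :: "'m \<Rightarrow> 'o" and trg :: "'m \<Rightarrow> 'o"
    and cmp :: "'m \<Rightarrow> 'm \<Rightarrow> 'm" and ide :: "'o \<Rightarrow> 'm"
  assumes src_ide: "src (ide a) = a" and trg_ide: "trg (ide a) = a"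
    and src_comp: "trg f = src g \<Longrightarrow> src (cmp g f) = src f"
    and trg_comp: "trg f = src g \<Longrightarrow> trg (cmp g f) = trg g"
    and comp_ide_right: "cmp f (ide (src f)) = f"
    and comp_ide_left: "cmp (ide (trg f)) f = f"
    and comp_assoc: "trg f = src g \<Longrightarrow> trg g = src h \<Longrightarrow>
                     cmp h (cmp g f) = cmp (cmp h g) f"

definition hom :: "('m \<Rightarrow> 'o) \<Rightarrow> ('m \<Rightarrow> 'o) \<Rightarrow> 'o \<Rightarrow> 'o \<Rightarrow> 'm set" where
  "hom src trg a b = {f. src f = a \<and> trg f = b}"

locale endofunctor = category src trg cmp ide
  for src :: "'m \<Rightarrow> 'o" and trg cmp ide +
  fixes Fo :: "'o \<Rightarrow> 'o" and Fm :: "'m \<Rightarrow> 'm"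
  assumes F_src: "src (Fm f) = Fo (src f)" and F_trg: "trg (Fm f) = Fo (trg f)"
    and F_ide: "Fm (ide a) = ide (Fo a)"
    and F_comp: "trg f = src g \<Longrightarrow> Fm (cmp g f) = cmp (Fm g) (Fm f)"

definition is_glb :: "('p \<Rightarrow> 'p \<Rightarrow> bool) \<Rightarrow> 'p set \<Rightarrow> 'p set \<Rightarrow> 'p \<Rightarrow> bool" where
  "is_glb le C A m \<longleftrightarrow> m \<in> C \<and> (\<forall>x\<in>A. le m x) \<and> (\<forall>y\<in>C. (\<forall>x\<in>A. le y x) \<longrightarrow> le y m)"

definition meet :: "('p \<Rightarrow> 'p \<Rightarrow> bool) \<Rightarrow> 'p set \<Rightarrow> 'p set \<Rightarrow> 'p" where
  "meet le C A = (THE m. is_glb le C A m)"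

text \<open>A functor Phi : C^op \<rightarrow> Pos (fibre P a with order le a, reindexing rx f = f^* )
  whose fibres have all meets (of arbitrary subsets) preserved by reindexing.\<close>
locale meet_indexed_poset = category src trg cmp ide
  for src :: "'m \<Rightarrow> 'o" and trg cmp ide +
  fixes P :: "'o \<Rightarrow> 'p set" and le :: "'o \<Rightarrow> 'p \<Rightarrow> 'p \<Rightarrow> bool" and rx :: "'m \<Rightarrow> 'p \<Rightarrow> 'p"
  assumes le_refl: "x \<in> P a \<Longrightarrow> le a x x"
    and le_trans: "x \<in> P a \<Longrightarrow> y \<in> P a \<Longrightarrow> z \<in> P a \<Longrightarrow> le a x y \<Longrightarrow> le a y z \<Longrightarrow> le a x z"
    and le_antisym: "x \<in> P a \<Longrightarrow> y \<in> P a \<Longrightarrow> le a x y \<Longrightarrow> le a y x \<Longrightarrow> x = y"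
    and rx_closed: "x \<in> P (trg f) \<Longrightarrow> rx f x \<in> P (src f)"
    and rx_mono: "x \<in> P (trg f) \<Longrightarrow> y \<in> P (trg f) \<Longrightarrow> le (trg f) x y \<Longrightarrow> le (src f) (rx f x) (rx f y)"
    and rx_ide: "x \<in> P a \<Longrightarrow> rx (ide a) x = x"
    and rx_comp: "trg f = src g \<Longrightarrow> x \<in> P (trg g) \<Longrightarrow> rx (cmp g f) x = rx f (rx g x)"
    and meets_exist: "A \<subseteq> P a \<Longrightarrow> \<exists>m. is_glb (le a) (P a) A m"
    and rx_meet: "A \<subseteq> P (trg f) \<Longrightarrow>
        rx f (meet (le (trg f)) (P (trg f)) A) = meet (le (src f)) (P (src f)) (rx f ` A)"

definition alpha :: "('o \<Rightarrow> 'p set) \<Rightarrow> ('o \<Rightarrow> 'p \<Rightarrow> 'p \<Rightarrow> bool) \<Rightarrow> ('m \<Rightarrow> 'p \<Rightarrow> 'p)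
    \<Rightarrow> 'p \<Rightarrow> 'o \<Rightarrow> 'm set \<Rightarrow> 'p" where
  "alpha P le rx dO Y S = meet (le Y) (P Y) ((\<lambda>k. rx k dO) ` S)"

definition gamma :: "('m \<Rightarrow> 'o) \<Rightarrow> ('m \<Rightarrow> 'o) \<Rightarrow> ('o \<Rightarrow> 'p \<Rightarrow> 'p \<Rightarrow> bool) \<Rightarrow> ('m \<Rightarrow> 'p \<Rightarrow> 'p)
    \<Rightarrow> 'o \<Rightarrow> 'p \<Rightarrow> 'o \<Rightarrow> 'p \<Rightarrow> 'm set" where
  "gamma src trg le rx Om dO Y d = {k \<in> hom src trg Y Om. le Y d (rx k dO)}"

definition clo :: "('m \<Rightarrow> 'o) \<Rightarrow> ('m \<Rightarrow> 'o) \<Rightarrow> ('o \<Rightarrow> 'p set) \<Rightarrow> ('o \<Rightarrow> 'p \<Rightarrow> 'p \<Rightarrow> bool)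
    \<Rightarrow> ('m \<Rightarrow> 'p \<Rightarrow> 'p) \<Rightarrow> 'o \<Rightarrow> 'p \<Rightarrow> 'o \<Rightarrow> 'm set \<Rightarrow> 'm set" where
  "clo src trg P le rx Om dO Y S = gamma src trg le rx Om dO Y (alpha P le rx dO Y S)"

definition Lift :: "('m \<Rightarrow> 'm \<Rightarrow> 'm) \<Rightarrow> ('m \<Rightarrow> 'm) \<Rightarrow> 'i set \<Rightarrow> ('i \<Rightarrow> 'm) \<Rightarrow> 'm set \<Rightarrow> 'm set" where
  "Lift cmp Fm Lam ev S = {cmp (ev l) (Fm h) | l h. l \<in> Lam \<and> h \<in> S}"

definition closure_operator_on :: "'a set \<Rightarrow> ('a set \<Rightarrow> 'a set) \<Rightarrow> bool" where
  "closure_operator_on U c \<longleftrightarrow>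
     (\<forall>S. S \<subseteq> U \<longrightarrow> c S \<subseteq> U) \<and>
     (\<forall>S T. S \<subseteq> T \<and> T \<subseteq> U \<longrightarrow> c S \<subseteq> c T) \<and>
     (\<forall>S. S \<subseteq> U \<longrightarrow> S \<subseteq> c S) \<and>
     (\<forall>S. S \<subseteq> U \<longrightarrow> c (c S) = c S)"

end

theory Submission
  imports Defs
begin

text \<open>Every set \<open>\<gamma>\<^sub>X(d)\<close> is \<open>cl\<^sub>X\<close>-closed, because \<open>\<gamma> \<circ> \<alpha> \<circ> \<gamma> = \<gamma>\<close> for the antitone Galois
  connection between \<open>\<alpha>\<close> and \<open>\<gamma>\<close>; so the subclosure \<open>cl'\<^sub>X\<close>, squeezed between the identity and
  \<open>cl\<^sub>X\<close>, fixes it. Hence \<open>\<alpha>\<^sub>X \<circ> lo\<^sub>X \<circ> \<gamma>\<^sub>X\<close> is \<open>\<alpha>\<^sub>X\<close> of \<open>c\<^sup>\<bullet>(\<Lambda>\<^sub>X(\<gamma>\<^sub>X d)) \<union> \<Theta>\<^sub>X\<close>; \<open>\<alpha>\<close> turns the union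
  into a binary meet, and since \<open>(k \<circ> c)\<^sup>* = c\<^sup>* \<circ> k\<^sup>*\<close> and \<open>c\<^sup>*\<close> preserves meets, \<open>\<alpha>\<^sub>X\<close> of the
  precomposed set is \<open>c\<^sup>*\<close> of \<open>\<alpha>\<^sub>F\<^sub>X(\<Lambda>\<^sub>X(\<gamma>\<^sub>X d))\<close>.\<close>

context meet_indexed_poset
begin

lemma is_glb_unique:
  "is_glb (le a) (P a) A m \<Longrightarrow> is_glb (le a) (P a) A m' \<Longrightarrow> m = m'"
  unfolding is_glb_def by (meson le_antisym)

lemma meet_eqI: "is_glb (le a) (P a) A m \<Longrightarrow> meet (le a) (P a) A = m"
  unfolding meet_def using is_glb_unique by blast

lemma is_glb_meet: "A \<subseteq> P a \<Longrightarrow> is_glb (le a) (P a) A (meet (le a) (P a) A)"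
  using meets_exist meet_eqI by metis

lemma meet_closed: "A \<subseteq> P a \<Longrightarrow> meet (le a) (P a) A \<in> P a"
  using is_glb_meet unfolding is_glb_def by blast

lemma meet_lower: "A \<subseteq> P a \<Longrightarrow> x \<in> A \<Longrightarrow> le a (meet (le a) (P a) A) x"
  using is_glb_meet unfolding is_glb_def by blast

lemma meet_greatest:
  "A \<subseteq> P a \<Longrightarrow> y \<in> P a \<Longrightarrow> (\<And>x. x \<in> A \<Longrightarrow> le a y x) \<Longrightarrow> le a y (meet (le a) (P a) A)"
  using is_glb_meet unfolding is_glb_def by blast

lemma meet_Un:
  assumes S: "S \<subseteq> P a" and T: "T \<subseteq> P a"
  shows "meet (le a) (P a) (S \<union> T) = meet (le a) (P a) {meet (le a) (P a) S, meet (le a) (P a) T}"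
proof -
  let ?mS = "meet (le a) (P a) S" and ?mT = "meet (le a) (P a) T"
  let ?m = "meet (le a) (P a) {?mS, ?mT}"
  have mS: "?mS \<in> P a" and mT: "?mT \<in> P a" using S T by (auto intro: meet_closed)
  then have pair: "{?mS, ?mT} \<subseteq> P a" by blast
  have m: "?m \<in> P a" using pair by (rule meet_closed)
  have "is_glb (le a) (P a) (S \<union> T) ?m"
    unfolding is_glb_def
  proof (intro conjI ballI impI m)
    fix x assume "x \<in> S \<union> T"
    then show "le a ?m x"
    proof
      assume "x \<in> S"
      then show ?thesis
        using le_trans[OF m mS] meet_lower[OF pair] meet_lower[OF S] S by blast
    next
      assume "x \<in> T"
      then show ?thesis
        using le_trans[OF m mT] meet_lower[OF pair] meet_lower[OF T] T by blast
    qed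
  next
    fix y assume "y \<in> P a" and "\<forall>x\<in>S \<union> T. le a y x"
    then show "le a y ?m"
      using S T pair by (auto intro!: meet_greatest)
  qed
  then show ?thesis by (rule meet_eqI)
qed

end

locale pointed_meet_indexed_poset = meet_indexed_poset src trg cmp ide P le rx
  for src :: "'m \<Rightarrow> 'o" and trg cmp ide P le rx +
  fixes Om :: 'o and dO :: 'p
  assumes dO_in: "dO \<in> P Om"
begin

lemma rx_dO_closed: "k \<in> hom src trg Y Om \<Longrightarrow> rx k dO \<in> P Y"
  using rx_closed dO_in unfolding hom_def by fastforce

lemma rx_dO_image_subset: "S \<subseteq> hom src trg Y Om \<Longrightarrow> (\<lambda>k. rx k dO) ` S \<subseteq> P Y"
  using rx_dO_closed by blast

lemma alpha_closed: "S \<subseteq> hom src trg Y Om \<Longrightarrow> alpha P le rx dO Y S \<in> P Y"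
  unfolding alpha_def by (intro meet_closed rx_dO_image_subset)

lemma alpha_lower:
  "S \<subseteq> hom src trg Y Om \<Longrightarrow> k \<in> S \<Longrightarrow> le Y (alpha P le rx dO Y S) (rx k dO)"
  unfolding alpha_def by (intro meet_lower rx_dO_image_subset) auto

lemma alpha_greatest:
  "S \<subseteq> hom src trg Y Om \<Longrightarrow> d \<in> P Y \<Longrightarrow> (\<And>k. k \<in> S \<Longrightarrow> le Y d (rx k dO))
    \<Longrightarrow> le Y d (alpha P le rx dO Y S)"
  unfolding alpha_def by (intro meet_greatest rx_dO_image_subset) auto

lemma gamma_subset_hom: "gamma src trg le rx Om dO Y d \<subseteq> hom src trg Y Om"
  unfolding gamma_def by blast

lemma subset_clo: "S \<subseteq> hom src trg Y Om \<Longrightarrow> S \<subseteq> clo src trg P le rx Om dO Y S"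
  unfolding clo_def gamma_def using alpha_lower by auto

lemma clo_gamma:
  assumes d: "d \<in> P Y"
  shows "clo src trg P le rx Om dO Y (gamma src trg le rx Om dO Y d) = gamma src trg le rx Om dO Y d"
proof
  let ?G = "gamma src trg le rx Om dO Y d"
  have d_le: "le Y d (alpha P le rx dO Y ?G)"
    using alpha_greatest[OF gamma_subset_hom d] unfolding gamma_def by blast
  show "clo src trg P le rx Om dO Y ?G \<subseteq> ?G"
  proof
    fix k assume "k \<in> clo src trg P le rx Om dO Y ?G"
    then have k: "k \<in> hom src trg Y Om" and "le Y (alpha P le rx dO Y ?G) (rx k dO)"
      unfolding clo_def gamma_def by auto
    then have "le Y d (rx k dO)"
      using le_trans[OF d alpha_closed[OF gamma_subset_hom] rx_dO_closed[OF k] d_le] by blast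
    then show "k \<in> ?G" using k unfolding gamma_def by blast
  qed
  show "?G \<subseteq> clo src trg P le rx Om dO Y ?G"
    using subset_clo[OF gamma_subset_hom] .
qed

lemma subclosure_gamma:
  assumes cl': "closure_operator_on (hom src trg Y Om) cl'"
    and sub: "\<And>S. S \<subseteq> hom src trg Y Om \<Longrightarrow> cl' S \<subseteq> clo src trg P le rx Om dO Y S"
    and d: "d \<in> P Y"
  shows "cl' (gamma src trg le rx Om dO Y d) = gamma src trg le rx Om dO Y d"
proof
  show "cl' (gamma src trg le rx Om dO Y d) \<subseteq> gamma src trg le rx Om dO Y d"
    using sub[OF gamma_subset_hom[of Y d]] clo_gamma[OF d] by simp
  show "gamma src trg le rx Om dO Y d \<subseteq> cl' (gamma src trg le rx Om dO Y d)"
    using cl' gamma_subset_hom[of Y d] unfolding closure_operator_on_def by simp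
qed

lemma alpha_Un:
  "S \<subseteq> hom src trg Y Om \<Longrightarrow> T \<subseteq> hom src trg Y Om \<Longrightarrow>
    alpha P le rx dO Y (S \<union> T) = meet (le Y) (P Y) {alpha P le rx dO Y S, alpha P le rx dO Y T}"
  unfolding alpha_def image_Un by (intro meet_Un rx_dO_image_subset)

lemma alpha_precomp:
  assumes S: "S \<subseteq> hom src trg Z Om" and c: "c \<in> hom src trg Y Z"
  shows "alpha P le rx dO Y ((\<lambda>t. cmp t c) ` S) = rx c (alpha P le rx dO Z S)"
proof -
  have c_st: "src c = Y" "trg c = Z" using c unfolding hom_def by auto
  have "rx (cmp t c) dO = rx c (rx t dO)" if "t \<in> S" for t
    using that S dO_in c_st rx_comp[of c t dO] unfolding hom_def by auto
  then have "(\<lambda>k. rx k dO) ` ((\<lambda>t. cmp t c) ` S) = rx c ` ((\<lambda>k. rx k dO) ` S)"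
    unfolding image_image by (rule image_cong[OF refl])
  then show ?thesis
    unfolding alpha_def using rx_meet[of "(\<lambda>k. rx k dO) ` S" c] rx_dO_image_subset[OF S] c_st
    by simp
qed

end

lemma (in endofunctor) Lift_subset_hom:
  assumes ev: "\<And>l. l \<in> Lam \<Longrightarrow> ev l \<in> hom src trg (Fo Om) Om"
    and S: "S \<subseteq> hom src trg X Om"
  shows "Lift cmp Fm Lam ev S \<subseteq> hom src trg (Fo X) Om"
proof
  fix t assume "t \<in> Lift cmp Fm Lam ev S"
  then obtain l h where t: "t = cmp (ev l) (Fm h)" and l: "l \<in> Lam" and h: "h \<in> S"
    unfolding Lift_def by blast
  have "src h = X" "trg h = Om" using h S unfolding hom_def by auto
  moreover have "src (ev l) = Fo Om" "trg (ev l) = Om" using ev[OF l] unfolding hom_def by auto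
  ultimately show "t \<in> hom src trg (Fo X) Om"
    unfolding t hom_def by (simp add: src_comp trg_comp F_src F_trg)
qed

theorem theorem3:
  fixes src trg :: "'m \<Rightarrow> 'o" and cmp :: "'m \<Rightarrow> 'm \<Rightarrow> 'm" and ide :: "'o \<Rightarrow> 'm"
    and P :: "'o \<Rightarrow> 'p set" and le :: "'o \<Rightarrow> 'p \<Rightarrow> 'p \<Rightarrow> bool" and rx :: "'m \<Rightarrow> 'p \<Rightarrow> 'p"
    and Fo :: "'o \<Rightarrow> 'o" and Fm :: "'m \<Rightarrow> 'm"
    and Om X :: 'o and dO :: 'p
    and Lam :: "'i set" and ev :: "'i \<Rightarrow> 'm"
    and cl' :: "'m set \<Rightarrow> 'm set" and Theta :: "'m set" and c :: 'm
  assumes Phi: "meet_indexed_poset src trg cmp ide P le rx"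
    and F: "endofunctor src trg cmp ide Fo Fm"
    and dO: "dO \<in> P Om"
    and ev: "\<And>l. l \<in> Lam \<Longrightarrow> ev l \<in> hom src trg (Fo Om) Om"
    and clos: "closure_operator_on (hom src trg X Om) cl'"
    and sub: "\<And>S. S \<subseteq> hom src trg X Om \<Longrightarrow> cl' S \<subseteq> clo src trg P le rx Om dO X S"
    and compat: "\<And>S. S \<subseteq> hom src trg X Om \<Longrightarrow>
        Lift cmp Fm Lam ev (cl' (clo src trg P le rx Om dO X S))
          \<subseteq> clo src trg P le rx Om dO (Fo X) (Lift cmp Fm Lam ev (cl' S))"
    and Theta: "Theta \<subseteq> hom src trg X Om"
    and c: "c \<in> hom src trg X (Fo X)"
  shows "\<forall>d \<in> P X.
      alpha P le rx dO X
        ((\<lambda>t. cmp t c) ` (Lift cmp Fm Lam ev (cl' (gamma src trg le rx Om dO X d))) \<union> Theta)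
    = meet (le X) (P X)
        {rx c (alpha P le rx dO (Fo X) (Lift cmp Fm Lam ev (gamma src trg le rx Om dO X d))),
         alpha P le rx dO X Theta}"
proof
  fix d assume d: "d \<in> P X"
  interpret pointed_meet_indexed_poset src trg cmp ide P le rx Om dO
    using Phi dO by (simp add: pointed_meet_indexed_poset_def pointed_meet_indexed_poset_axioms_def)
  interpret endofunctor src trg cmp ide Fo Fm by (rule F)
  let ?L = "Lift cmp Fm Lam ev (gamma src trg le rx Om dO X d)"
  have L: "?L \<subseteq> hom src trg (Fo X) Om"
    using Lift_subset_hom[OF ev gamma_subset_hom] .
  have precomp_L: "(\<lambda>t. cmp t c) ` ?L \<subseteq> hom src trg X Om"
    using L c by (auto simp: hom_def src_comp trg_comp)
  have "cl' (gamma src trg le rx Om dO X d) = gamma src trg le rx Om dO X d"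
    using subclosure_gamma[OF clos sub d] .
  moreover have "alpha P le rx dO X ((\<lambda>t. cmp t c) ` ?L \<union> Theta)
      = meet (le X) (P X) {alpha P le rx dO X ((\<lambda>t. cmp t c) ` ?L), alpha P le rx dO X Theta}"
    using alpha_Un[OF precomp_L Theta] .
  ultimately show "alpha P le rx dO X ((\<lambda>t. cmp t c) ` Lift cmp Fm Lam ev
      (cl' (gamma src trg le rx Om dO X d)) \<union> Theta)
    = meet (le X) (P X) {rx c (alpha P le rx dO (Fo X) ?L), alpha P le rx dO X Theta}"
    unfolding alpha_precomp[OF L c] by simp
qed

end
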